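(* Under the full correlation model $\mathtt{FC}$, given $n$, $m$ and a scoring vector $s$, a vector $k=(k_1,\ldots,k_n)$ of non-negative integers with $\sum_i k_i=m$ maximizing the egalitarian social welfare $SW^e_{\mathtt{FC}}(k)$, and one maximizing the Nash social welfare $SW^n_{\mathtt{FC}}(k)$, can each be computed in $O(nm^2)$ time.
   Context: There are $n$ agents $a_1,\ldots,a_n$ and $m$ items. A preference profile assigns to each agent a strict ranking of the items. A scoring vector is $s=(s_1,\ldots,s_m)$ of non-negative rationals with $s_1\ge\cdots\ge s_m$; an agent's value for her $j$-th preferred item is $s_j$, and utilities are additive. Given $k=(k_1,\ldots,k_n)$ with non-negative integer entries summing to $m$, agent $a_1$ first picks $k_1$ items, then $a_2$ picks $k_2$ of the remaining items, etc., each agent greedily picking her most preferred remaining items. $EU^k_\Psi(a)$ is the expected total score received by $a$ when the profile is drawn from $\Psi$. Social welfare: utilitarian $SW^u_\Psi(k)=\sum_a EU^k_\Psi(a)$, egalitarian $SW^e_\Psi(k)=\min_a EU^k_\Psi(a)$, Nash $SW^n_\Psi(k)=\prod_a EU^k_\Psi(a)$. Model $\mathtt{FC}$ (full correlation): all agents have the same ranking. *)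

theory Defs
  imports Main "HOL-Combinatorics.Multiset_Permutations"
begin

text \<open>Items are 0..<m, agents are 0..<n (agent a here is a_(a+1) of the paper).
A scoring vector is a list s of length m, s ! j is the score of the (j+1)-th
preferred item. A ranking is a list of all items, most preferred first.\<close>

definition scoring_vector :: "rat list \<Rightarrow> bool" where
  "scoring_vector s \<longleftrightarrow> (\<forall>x\<in>set s. 0 \<le> x) \<and> sorted_wrt (\<ge>) s"

definition is_ranking :: "nat \<Rightarrow> nat list \<Rightarrow> bool" where
  "is_ranking m r \<longleftrightarrow> r \<in> permutations_of_set {0..<m}"

definition is_pick_vector :: "nat \<Rightarrow> nat \<Rightarrow> nat list \<Rightarrow> bool" where
  "is_pick_vector n m k \<longleftrightarrow> length k = n \<and> sum_list k = m"

fun picking :: "nat list \<Rightarrow> nat list list \<Rightarrow> nat set \<Rightarrow> nat set list" where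
  "picking (ki # ks) (r # rs) R =
     (let B = set (take ki (filter (\<lambda>x. x \<in> R) r)) in B # picking ks rs (R - B))"
| "picking _ _ _ = []"

definition utility :: "rat list \<Rightarrow> nat list list \<Rightarrow> nat list \<Rightarrow> nat \<Rightarrow> rat" where
  "utility s P k a =
     (let m = length s; B = picking k P {0..<m} ! a
      in (\<Sum>j<m. if (P ! a) ! j \<in> B then s ! j else 0))"

text \<open>Expected utility under the full correlation model FC: a single ranking,
drawn uniformly at random, is shared by all n agents.\<close>
definition EU_FC :: "nat \<Rightarrow> rat list \<Rightarrow> nat list \<Rightarrow> nat \<Rightarrow> rat" where
  "EU_FC n s k a =
     (let m = length s; Rs = permutations_of_set {0..<m}
      in (\<Sum>r\<in>Rs. utility s (replicate n r) k a) / of_nat (card Rs))"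

definition SW_e_FC :: "nat \<Rightarrow> rat list \<Rightarrow> nat list \<Rightarrow> rat" where
  "SW_e_FC n s k = Min ((\<lambda>a. EU_FC n s k a) ` {0..<n})"

definition SW_n_FC :: "nat \<Rightarrow> rat list \<Rightarrow> nat list \<Rightarrow> rat" where
  "SW_n_FC n s k = (\<Prod>a<n. EU_FC n s k a)"

text \<open>Running time is measured in the standard step-counting model (as in the
time framework of HOL-Library): each call of a defined function costs 1 plus the
cost of the calls it makes; constructors, pattern matching and arithmetic /
comparison operations on rationals (min, +, *, <) are unit-cost primitives counted
as 0 (absorbed in the +1 of the enclosing call). Each T_f below is the time function
of f, written by hand following that translation (every auxiliary call, including
the selector fst, is charged).\<close>

text \<open>Flag True: egalitarian (combine with min); False: Nash (combine with product).\<close>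
fun comb :: "bool \<Rightarrow> rat \<Rightarrow> rat \<Rightarrow> rat" where
  "comb b x y = (if b then min x y else x * y)"

fun T_comb :: "bool \<Rightarrow> rat \<Rightarrow> rat \<Rightarrow> nat" where
  "T_comb b x y = 1"

text \<open>Row for the last agent: entry j (for the suffix drop j s) is
(value of taking all remaining items, [number of remaining items]).\<close>
fun last_row :: "rat list \<Rightarrow> (rat \<times> nat list) list" where
  "last_row [] = [(0, [0])]"
| "last_row (x # xs) =
     (case last_row xs of
        (v, c # cs) # R \<Rightarrow> (x + v, [Suc c]) # (v, c # cs) # R
      | _ \<Rightarrow> [])"

fun T_last_row :: "rat list \<Rightarrow> nat" where
  "T_last_row [] = 1"
| "T_last_row (x # xs) = T_last_row xs + 1"

fun best :: "bool \<Rightarrow> rat \<Rightarrow> nat \<Rightarrow> rat list \<Rightarrow> (rat \<times> nat list) list \<Rightarrow> rat \<times> nat list" where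
  "best b a t [] ((v, ks) # R) = (comb b a v, t # ks)"
| "best b a t (x # xs) ((v, ks) # R) =
     (let c = (comb b a v, t # ks);
          d = best b (a + x) (Suc t) xs R
      in if fst c < fst d then d else c)"
| "best b a t _ [] = (0, [])"

fun T_best :: "bool \<Rightarrow> rat \<Rightarrow> nat \<Rightarrow> rat list \<Rightarrow> (rat \<times> nat list) list \<Rightarrow> nat" where
  "T_best b a t [] ((v, ks) # R) = T_comb b a v + 1"
| "T_best b a t (x # xs) ((v, ks) # R) =
     T_comb b a v + T_best b (a + x) (Suc t) xs R + 2 + 1"
| "T_best b a t _ [] = 1"

fun next_row :: "bool \<Rightarrow> rat list \<Rightarrow> (rat \<times> nat list) list \<Rightarrow> (rat \<times> nat list) list" where
  "next_row b [] R = [best b 0 0 [] R]"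
| "next_row b (x # xs) (r # R) = best b 0 0 (x # xs) (r # R) # next_row b xs R"
| "next_row b (x # xs) [] = []"

fun T_next_row :: "bool \<Rightarrow> rat list \<Rightarrow> (rat \<times> nat list) list \<Rightarrow> nat" where
  "T_next_row b [] R = T_best b 0 0 [] R + 1"
| "T_next_row b (x # xs) (r # R) = T_best b 0 0 (x # xs) (r # R) + T_next_row b xs R + 1"
| "T_next_row b (x # xs) [] = 1"

fun iter_rows :: "bool \<Rightarrow> nat \<Rightarrow> rat list \<Rightarrow> (rat \<times> nat list) list \<Rightarrow> (rat \<times> nat list) list" where
  "iter_rows b 0 s R = R"
| "iter_rows b (Suc i) s R = iter_rows b i s (next_row b s R)"

fun T_iter_rows :: "bool \<Rightarrow> nat \<Rightarrow> rat list \<Rightarrow> (rat \<times> nat list) list \<Rightarrow> nat" where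
  "T_iter_rows b 0 s R = 1"
| "T_iter_rows b (Suc i) s R = T_next_row b s R + T_iter_rows b i s (next_row b s R) + 1"

fun first_choice :: "(rat \<times> nat list) list \<Rightarrow> nat list" where
  "first_choice ((v, ks) # R) = ks"
| "first_choice [] = []"

fun T_first_choice :: "(rat \<times> nat list) list \<Rightarrow> nat" where
  "T_first_choice R = 1"

fun opt_pick :: "bool \<Rightarrow> nat \<Rightarrow> rat list \<Rightarrow> nat list" where
  "opt_pick b n s = first_choice (iter_rows b (n - 1) s (last_row s))"

fun T_opt_pick :: "bool \<Rightarrow> nat \<Rightarrow> rat list \<Rightarrow> nat" where
  "T_opt_pick b n s =
     T_last_row s + T_iter_rows b (n - 1) s (last_row s)
     + T_first_choice (iter_rows b (n - 1) s (last_row s)) + 1"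

end

theory Submission
  imports Defs
begin

text \<open>Under full correlation all agents share the drawn ranking r, so agent a receives
exactly the items at positions p_a, ..., p_a + k_a - 1 of r, where p_a = k_1 + ... + k_(a-1).
Her utility is therefore the sum of the block s_(p_a), ..., s_(p_a + k_a - 1) of the scoring
vector, whatever r is, and so is her expected utility. Both welfares become a min, resp. a
product, of the block sums of a composition of s, and the algorithm is a dynamic program over
suffixes of s: row i holds, for every suffix, an optimal split of it among i agents, and row
i+1 is obtained by trying every size for the first block. This is sound because min x and
multiplication by x are monotone for x \<ge> 0. Each of the n - 1 rows costs O(m^2) steps.\<close>

section \<open>Welfare of a split of the scoring vector\<close>

fun welfare :: "bool \<Rightarrow> rat list \<Rightarrow> nat list \<Rightarrow> rat" where
  "welfare b xs [] = 0"
| "welfare b xs [k] = sum_list (take k xs)"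
| "welfare b xs (k # k' # ks) = comb b (sum_list (take k xs)) (welfare b (drop k xs) (k' # ks))"

lemma welfare_Cons:
  "ks \<noteq> [] \<Longrightarrow> welfare b xs (k # ks) = comb b (sum_list (take k xs)) (welfare b (drop k xs) ks)"
  by (cases ks) auto

definition block_sum :: "rat list \<Rightarrow> nat list \<Rightarrow> nat \<Rightarrow> rat" where
  "block_sum xs k a = sum_list (take (k ! a) (drop (sum_list (take a k)) xs))"

lemma block_sum_Cons_0: "block_sum xs (k # ks) 0 = sum_list (take k xs)"
  by (simp add: block_sum_def)

lemma block_sum_Cons_Suc: "block_sum xs (k # ks) (Suc a) = block_sum (drop k xs) ks a"
  by (simp add: block_sum_def add.commute)

lemma welfare_True_eq_Min:
  "ks \<noteq> [] \<Longrightarrow> welfare True xs ks = Min (block_sum xs ks ` {..<length ks})"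
proof (induction ks arbitrary: xs)
  case Nil
  then show ?case by simp
next
  case (Cons k ks)
  show ?case
  proof (cases "ks = []")
    case True
    then show ?thesis by (simp add: block_sum_Cons_0 lessThan_Suc)
  next
    case False
    have "block_sum xs (k # ks) ` {..<length (k # ks)}
        = insert (sum_list (take k xs)) (block_sum (drop k xs) ks ` {..<length ks})"
      by (simp add: lessThan_Suc_eq_insert_0 image_image block_sum_Cons_Suc block_sum_Cons_0)
    moreover have "block_sum (drop k xs) ks ` {..<length ks} \<noteq> {}"
      using False by (simp add: lessThan_empty_iff)
    ultimately show ?thesis using Cons False by (simp add: welfare_Cons)
  qed
qed

lemma welfare_False_eq_prod:
  "ks \<noteq> [] \<Longrightarrow> welfare False xs ks = (\<Prod>a<length ks. block_sum xs ks a)"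
proof (induction ks arbitrary: xs)
  case Nil
  then show ?case by simp
next
  case (Cons k ks)
  show ?case
  proof (cases "ks = []")
    case True
    then show ?thesis by (simp add: block_sum_Cons_0)
  next
    case False
    with Cons show ?thesis
      by (simp add: welfare_Cons block_sum_Cons_0 block_sum_Cons_Suc prod.lessThan_Suc_shift
          del: prod.lessThan_Suc)
  qed
qed

section \<open>Expected utilities under full correlation\<close>

lemma filter_mem_set_drop:
  assumes "distinct r"
  shows "filter (\<lambda>x. x \<in> set (drop p r)) r = drop p r"
proof -
  have "filter (\<lambda>x. x \<in> set (drop p r)) (take p r) = []"
    using set_take_disj_set_drop_if_distinct[OF assms, of p p] by (auto simp: filter_empty_conv)
  then show ?thesis
    by (metis append_Nil append_take_drop_id filter_append filter_True)
qed

lemma set_diff_set_take: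
  assumes "distinct l"
  shows "set l - set (take k l) = set (drop k l)"
proof -
  have "set l = set (take k l) \<union> set (drop k l)"
    by (metis append_take_drop_id set_append)
  with set_take_disj_set_drop_if_distinct[OF assms, of k k] show ?thesis
    by blast
qed

lemma picking_replicate_nth:
  assumes "distinct r" "a < length ks"
  shows "picking ks (replicate (length ks) r) (set (drop p r)) ! a
           = set (take (ks ! a) (drop (p + sum_list (take a ks)) r))"
  using assms(2)
proof (induction ks arbitrary: p a)
  case Nil
  then show ?case by simp
next
  case (Cons k ks)
  have "set (drop p r) - set (take k (drop p r)) = set (drop (p + k) r)"
    using set_diff_set_take[of "drop p r" k] assms(1) by (simp add: add.commute)
  with Cons show ?case
    by (cases a) (auto simp: filter_mem_set_drop[OF assms(1)] Let_def add.assoc)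
qed

lemma nth_mem_set_take_drop_iff:
  assumes "distinct r" "j < length r"
  shows "r ! j \<in> set (take K (drop P r)) \<longleftrightarrow> P \<le> j \<and> j < P + K"
proof -
  have "r ! j \<in> set (take K (drop P r)) \<longleftrightarrow> (\<exists>i < min K (length r - P). r ! (P + i) = r ! j)"
    by (auto simp: in_set_conv_nth)
  also have "\<dots> \<longleftrightarrow> (\<exists>i < min K (length r - P). P + i = j)"
    using assms by (auto simp: nth_eq_iff_index_eq)
  also have "\<dots> \<longleftrightarrow> P \<le> j \<and> j < P + K"
    using assms(2) by (auto intro!: exI[of _ "j - P"])
  finally show ?thesis .
qed

lemma sum_list_take_drop:
  "sum_list (take K (drop P s)) = (\<Sum>j<length s. if P \<le> j \<and> j < P + K then s ! j else 0)"
proof (induction s arbitrary: P K)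
  case Nil
  then show ?case by simp
next
  case (Cons x s)
  show ?case
  proof (cases P)
    case 0
    show ?thesis
    proof (cases K)
      case (Suc K')
      have "sum_list (take K' s) = (\<Sum>j<length s. if j < K' then s ! j else 0)"
        using Cons.IH[where P = 0 and K = K'] by simp
      with \<open>P = 0\<close> Suc show ?thesis
        by (simp add: sum.lessThan_Suc_shift del: sum.lessThan_Suc cong: if_cong)
    qed (simp add: \<open>P = 0\<close>)
  next
    case (Suc P')
    with Cons.IH[where P = P'] show ?thesis
      by (simp add: sum.lessThan_Suc_shift del: sum.lessThan_Suc cong: if_cong)
  qed
qed

lemma utility_replicate_eq_block_sum:
  assumes r: "r \<in> permutations_of_set {0..<length s}" and a: "a < length k"
  shows "utility s (replicate (length k) r) k a = block_sum s k a"
proof -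
  have d: "distinct r" and sr: "set r = {0..<length s}"
    using r by (auto simp: permutations_of_set_def)
  have lr: "length r = length s"
    using d sr distinct_card by fastforce
  let ?P = "sum_list (take a k)"
  have B: "picking k (replicate (length k) r) {0..<length s} ! a = set (take (k ! a) (drop ?P r))"
    using picking_replicate_nth[OF d a, of 0] sr by simp
  have "utility s (replicate (length k) r) k a
     = (\<Sum>j<length s. if r ! j \<in> set (take (k ! a) (drop ?P r)) then s ! j else 0)"
    unfolding utility_def Let_def B using a by simp
  also have "\<dots> = (\<Sum>j<length s. if ?P \<le> j \<and> j < ?P + k ! a then s ! j else 0)"
    using nth_mem_set_take_drop_iff[OF d] lr by (intro sum.cong) auto
  also have "\<dots> = block_sum s k a"
    by (simp add: block_sum_def sum_list_take_drop)
  finally show ?thesis .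
qed

lemma EU_FC_eq_block_sum:
  assumes "a < n" "length k = n"
  shows "EU_FC n s k a = block_sum s k a"
proof -
  let ?Rs = "permutations_of_set {0..<length s}"
  have "(\<Sum>r\<in>?Rs. utility s (replicate n r) k a) = (\<Sum>r\<in>?Rs. block_sum s k a)"
    using utility_replicate_eq_block_sum assms by (intro sum.cong) auto
  then have "(\<Sum>r\<in>?Rs. utility s (replicate n r) k a) = of_nat (card ?Rs) * block_sum s k a"
    by simp
  moreover have "card ?Rs \<noteq> 0"
    by (simp add: card_permutations_of_set)
  ultimately show ?thesis
    unfolding EU_FC_def Let_def by simp
qed

lemma SW_e_FC_eq_welfare:
  assumes "is_pick_vector n (length s) k" "n \<ge> 1"
  shows "SW_e_FC n s k = welfare True s k"
proof -
  have l: "length k = n" and k: "k \<noteq> []"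
    using assms by (auto simp: is_pick_vector_def)
  have "SW_e_FC n s k = Min (block_sum s k ` {..<n})"
    unfolding SW_e_FC_def atLeast0LessThan using EU_FC_eq_block_sum[OF _ l]
    by (intro arg_cong[where f = Min] image_cong) auto
  then show ?thesis
    using welfare_True_eq_Min[OF k] l by simp
qed

lemma SW_n_FC_eq_welfare:
  assumes "is_pick_vector n (length s) k" "n \<ge> 1"
  shows "SW_n_FC n s k = welfare False s k"
proof -
  have l: "length k = n" and k: "k \<noteq> []"
    using assms by (auto simp: is_pick_vector_def)
  have "SW_n_FC n s k = (\<Prod>a<n. block_sum s k a)"
    unfolding SW_n_FC_def using EU_FC_eq_block_sum[OF _ l] by simp
  then show ?thesis
    using welfare_False_eq_prod[OF k] l by simp
qed

section \<open>Correctness of the dynamic program\<close>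

lemma comb_mono_right: "0 \<le> x \<Longrightarrow> y \<le> y' \<Longrightarrow> comb b x y \<le> comb b x y'"
  by (auto simp: mult_left_mono min.coboundedI2)

definition optimal_entry :: "bool \<Rightarrow> nat \<Rightarrow> rat list \<Rightarrow> rat \<times> nat list \<Rightarrow> bool" where
  "optimal_entry b i xs e \<longleftrightarrow>
     length (snd e) = i \<and> sum_list (snd e) = length xs \<and> fst e = welfare b xs (snd e) \<and>
     (\<forall>ks. length ks = i \<and> sum_list ks = length xs \<longrightarrow> welfare b xs ks \<le> fst e)"

text \<open>Entry j of an optimal row for xs is an optimal entry for the suffix drop j xs.\<close>
fun optimal_row :: "bool \<Rightarrow> nat \<Rightarrow> rat list \<Rightarrow> (rat \<times> nat list) list \<Rightarrow> bool" where
  "optimal_row b i [] R \<longleftrightarrow> (\<exists>e. R = [e] \<and> optimal_entry b i [] e)"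
| "optimal_row b i (x # xs) R \<longleftrightarrow>
     (\<exists>e R'. R = e # R' \<and> optimal_entry b i (x # xs) e \<and> optimal_row b i xs R')"

lemma optimal_row_hd:
  "optimal_row b i xs R \<Longrightarrow> \<exists>e R'. R = e # R' \<and> optimal_entry b i xs e"
  by (cases xs) auto

lemma last_row_hd: "\<exists>R. last_row xs = (sum_list xs, [length xs]) # R"
  by (induction xs) auto

lemma optimal_row_last_row: "optimal_row b 1 xs (last_row xs)"
proof (induction xs)
  case Nil
  then show ?case by (auto simp: optimal_entry_def length_Suc_conv)
next
  case (Cons x xs)
  obtain R where "last_row xs = (sum_list xs, [length xs]) # R"
    using last_row_hd by blast
  with Cons show ?case
    by (auto simp: optimal_entry_def length_Suc_conv)
qed

text \<open>In best b a t ys R, the accumulator a is the sum of the items already given to the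
first agent and t their number.\<close>

lemma best_attained:
  assumes "optimal_row b i ys R"
  shows "\<exists>u\<le>length ys. \<exists>ks. snd (best b a t ys R) = (t + u) # ks \<and> length ks = i \<and>
           sum_list ks = length ys - u \<and>
           fst (best b a t ys R) = comb b (a + sum_list (take u ys)) (welfare b (drop u ys) ks)"
  using assms
proof (induction ys arbitrary: a t R)
  case Nil
  then show ?case by (auto simp: optimal_entry_def)
next
  case (Cons y ys)
  then obtain v ks R' where R: "R = (v, ks) # R'" and e: "optimal_entry b i (y # ys) (v, ks)"
    and row: "optimal_row b i ys R'"
    by auto
  let ?d = "best b (a + y) (Suc t) ys R'"
  show ?case
  proof (cases "comb b a v < fst ?d")
    case False
    then show ?thesis
      using R e by (intro exI[of _ 0]) (auto simp: optimal_entry_def Let_def)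
  next
    case True
    from Cons.IH[OF row, of "a + y" "Suc t"] obtain u ks' where "u \<le> length ys"
      "snd ?d = (Suc t + u) # ks'" "length ks' = i" "sum_list ks' = length ys - u"
      "fst ?d = comb b (a + y + sum_list (take u ys)) (welfare b (drop u ys) ks')"
      by blast
    with True R show ?thesis
      by (intro exI[of _ "Suc u"]) (auto simp: Let_def add.assoc)
  qed
qed

lemma best_maximal:
  assumes "optimal_row b i ys R" "0 \<le> a" "\<forall>y\<in>set ys. 0 \<le> y"
    and "u \<le> length ys" "length ks = i" "sum_list ks = length ys - u"
  shows "comb b (a + sum_list (take u ys)) (welfare b (drop u ys) ks) \<le> fst (best b a t ys R)"
  using assms
proof (induction ys arbitrary: a t R u)
  case Nil
  then obtain v ks0 where "R = [(v, ks0)]" "welfare b [] ks \<le> v"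
    by (auto simp: optimal_entry_def)
  with Nil.prems(2,4) comb_mono_right[OF Nil.prems(2)] show ?case
    by simp
next
  case (Cons y ys)
  then obtain v ks0 R' where R: "R = (v, ks0) # R'" and e: "optimal_entry b i (y # ys) (v, ks0)"
    and row: "optimal_row b i ys R'"
    by auto
  let ?d = "best b (a + y) (Suc t) ys R'"
  have best: "best b a t (y # ys) R = (if comb b a v < fst ?d then ?d else (comb b a v, t # ks0))"
    using R by (simp add: Let_def)
  show ?case
  proof (cases u)
    case 0
    then have "welfare b (y # ys) ks \<le> v"
      using e Cons.prems by (auto simp: optimal_entry_def)
    then have "comb b a (welfare b (y # ys) ks) \<le> comb b a v"
      by (rule comb_mono_right[OF Cons.prems(2)])
    with 0 best show ?thesis by auto
  next
    case (Suc u')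
    have "comb b (a + y + sum_list (take u' ys)) (welfare b (drop u' ys) ks) \<le> fst ?d"
      using Cons.IH[OF row] Cons.prems Suc by auto
    with Suc best show ?thesis by (auto simp: add.assoc)
  qed
qed

lemma optimal_entry_best:
  assumes "optimal_row b i xs R" "i \<ge> 1" "\<forall>x\<in>set xs. 0 \<le> x"
  shows "optimal_entry b (Suc i) xs (best b 0 0 xs R)"
  unfolding optimal_entry_def
proof (intro conjI allI impI)
  obtain u ks where u: "u \<le> length xs" "snd (best b 0 0 xs R) = u # ks" "length ks = i"
    "sum_list ks = length xs - u"
    "fst (best b 0 0 xs R) = comb b (sum_list (take u xs)) (welfare b (drop u xs) ks)"
    using best_attained[OF assms(1), of 0 0] by auto
  have "ks \<noteq> []" using u(3) assms(2) by auto
  with u show "length (snd (best b 0 0 xs R)) = Suc i"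
    and "sum_list (snd (best b 0 0 xs R)) = length xs"
    and "fst (best b 0 0 xs R) = welfare b xs (snd (best b 0 0 xs R))"
    by (simp_all add: welfare_Cons)
next
  fix ks2 assume ks2: "length ks2 = Suc i \<and> sum_list ks2 = length xs"
  then obtain u ks where "ks2 = u # ks" "ks \<noteq> []" "u \<le> length xs" "length ks = i"
    "sum_list ks = length xs - u"
    using assms(2) by (cases ks2) force+
  with best_maximal[OF assms(1) order_refl assms(3), of u ks 0] show
    "welfare b xs ks2 \<le> fst (best b 0 0 xs R)"
    by (simp add: welfare_Cons)
qed

lemma optimal_row_next_row:
  assumes "optimal_row b i xs R" "i \<ge> 1" "\<forall>x\<in>set xs. 0 \<le> x"
  shows "optimal_row b (Suc i) xs (next_row b xs R)"
  using assms
proof (induction xs arbitrary: R)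
  case Nil
  then show ?case using optimal_entry_best[OF Nil.prems] by simp
next
  case (Cons x xs)
  then obtain e R' where "R = e # R'" "optimal_row b i xs R'" by auto
  with Cons optimal_entry_best[OF Cons.prems] show ?case by simp
qed

lemma optimal_row_iter_rows:
  "optimal_row b i xs R \<Longrightarrow> i \<ge> 1 \<Longrightarrow> \<forall>x\<in>set xs. 0 \<le> x
     \<Longrightarrow> optimal_row b (i + j) xs (iter_rows b j xs R)"
proof (induction j arbitrary: i R)
  case 0
  then show ?case by simp
next
  case (Suc j)
  then show ?case
    using Suc.IH[OF optimal_row_next_row[OF Suc.prems]] by simp
qed

lemma opt_pick_optimal:
  assumes "n \<ge> 1" "\<forall>x\<in>set s. 0 \<le> x"
  shows "is_pick_vector n (length s) (opt_pick b n s)"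
    and "is_pick_vector n (length s) k \<Longrightarrow> welfare b s k \<le> welfare b s (opt_pick b n s)"
proof -
  have "optimal_row b n s (iter_rows b (n - 1) s (last_row s))"
    using optimal_row_iter_rows[OF optimal_row_last_row _ assms(2), of b "n - 1"] assms(1)
    by simp
  then obtain v ks R where R: "iter_rows b (n - 1) s (last_row s) = (v, ks) # R"
    and e: "optimal_entry b n s (v, ks)"
    using optimal_row_hd by fastforce
  have "opt_pick b n s = ks" using R by simp
  with e show "is_pick_vector n (length s) (opt_pick b n s)"
    and "is_pick_vector n (length s) k \<Longrightarrow> welfare b s k \<le> welfare b s (opt_pick b n s)"
    by (auto simp: optimal_entry_def is_pick_vector_def)
qed

section \<open>Running time\<close>

lemma T_best_le: "T_best b a t xs R \<le> 4 * length xs + 2"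
  by (induction b a t xs R rule: T_best.induct) auto

lemma T_next_row_le: "T_next_row b xs R \<le> 4 * (length xs + 1)^2"
proof (induction b xs R rule: T_next_row.induct)
  case (1 b R)
  then show ?case
    using T_best_le[of b 0 0 "[]" R] by simp
next
  case (2 b x xs r R)
  then show ?case
    using T_best_le[of b 0 0 "x # xs" "r # R"] by (simp add: power2_eq_square algebra_simps)
qed simp

lemma T_iter_rows_le: "T_iter_rows b i s R \<le> i * (4 * (length s + 1)^2 + 1) + 1"
proof (induction i arbitrary: R)
  case (Suc i)
  show ?case
    using Suc.IH[of "next_row b s R"] T_next_row_le[of b s R] by simp
qed simp

lemma T_last_row_eq: "T_last_row s = length s + 1"
  by (induction s) auto

lemma T_opt_pick_le:
  assumes "n \<ge> 1"
  shows "T_opt_pick b n s \<le> 8 * n * (length s + 1)^2"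
proof -
  let ?M = "(length s + 1)^2"
  have M: "length s + 1 \<le> ?M"
    by (simp add: power2_eq_square)
  have "T_opt_pick b n s \<le> (length s + 1) + ((n - 1) * (4 * ?M + 1) + 1) + 1 + 1"
    using T_iter_rows_le[of b "n - 1" s "last_row s"] by (simp add: T_last_row_eq)
  also have "\<dots> \<le> 8 * ?M + (n - 1) * (8 * ?M)"
  proof -
    have "(n - 1) * (4 * ?M + 1) \<le> (n - 1) * (8 * ?M)"
      by (intro mult_le_mono) auto
    with M show ?thesis by linarith
  qed
  also have "\<dots> = 8 * n * ?M"
    using assms by (cases n) (simp_all add: algebra_simps)
  finally show ?thesis .
qed

theorem theorem1:
  "\<exists>C::nat. \<forall>n s. n \<ge> 1 \<and> scoring_vector s \<longrightarrow>
     (is_pick_vector n (length s) (opt_pick True n s) \<and>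
      (\<forall>k. is_pick_vector n (length s) k \<longrightarrow>
             SW_e_FC n s k \<le> SW_e_FC n s (opt_pick True n s)) \<and>
      T_opt_pick True n s \<le> C * n * (length s + 1)^2) \<and>
     (is_pick_vector n (length s) (opt_pick False n s) \<and>
      (\<forall>k. is_pick_vector n (length s) k \<longrightarrow>
             SW_n_FC n s k \<le> SW_n_FC n s (opt_pick False n s)) \<and>
      T_opt_pick False n s \<le> C * n * (length s + 1)^2)"
proof (intro exI[of _ 8] allI impI)
  fix n :: nat and s :: "rat list"
  assume "n \<ge> 1 \<and> scoring_vector s"
  then have n: "n \<ge> 1" and nonneg: "\<forall>x\<in>set s. 0 \<le> x"
    by (auto simp: scoring_vector_def)
  note opt = opt_pick_optimal[OF n nonneg]
  then show "(is_pick_vector n (length s) (opt_pick True n s) \<and>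
      (\<forall>k. is_pick_vector n (length s) k \<longrightarrow>
             SW_e_FC n s k \<le> SW_e_FC n s (opt_pick True n s)) \<and>
      T_opt_pick True n s \<le> 8 * n * (length s + 1)^2) \<and>
     (is_pick_vector n (length s) (opt_pick False n s) \<and>
      (\<forall>k. is_pick_vector n (length s) k \<longrightarrow>
             SW_n_FC n s k \<le> SW_n_FC n s (opt_pick False n s)) \<and>
      T_opt_pick False n s \<le> 8 * n * (length s + 1)^2)"
    using SW_e_FC_eq_welfare[OF _ n] SW_n_FC_eq_welfare[OF _ n] T_opt_pick_le[OF n] by auto
qed

end
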